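(* Let $L$ be an ideal lattice and $L'\subseteq L$ a subset such that (i) $\inf A\in L'$ for every $A\subseteq L'$, and (ii) $\sup A\in L'$ for every directed $A\subseteq L'$. Define $\pi\colon L\to L'$ by $\pi(a)=\bigwedge\{a'\in L'\mid a\leq a'\}$ and on $L'$ the product $a\cdot b=\pi(ab)$. Suppose (iii) $\pi(a\pi(b))=\pi(ab)=\pi(\pi(a)b)$ for all $a,b\in L$. Then $L'$, with the partial order induced from $L$ and the product $\cdot$, is an ideal lattice.
   Context: An ideal lattice is a poset $(L,\leq)$ with an associative multiplication such that: (L1) $L$ is a complete lattice; (L2) every element is a supremum of compact elements ($a$ is compact if $a\leq\sup A$ implies $a\leq\sup A'$ for some finite $A'\subseteq A$); (L3) multiplication distributes over binary joins on both sides; (L4) $1=\sup L$ is compact and is a two-sided identity; (L5) products of compact elements are compact. *)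

theory Defs
  imports Main
begin

definition is_lub_in :: "'a::order set \<Rightarrow> 'a set \<Rightarrow> 'a \<Rightarrow> bool" where
  "is_lub_in S A x \<longleftrightarrow> x \<in> S \<and> (\<forall>y\<in>A. y \<le> x) \<and> (\<forall>z\<in>S. (\<forall>y\<in>A. y \<le> z) \<longrightarrow> x \<le> z)"

definition sup_in :: "'a::order set \<Rightarrow> 'a set \<Rightarrow> 'a" where
  "sup_in S A = (THE x. is_lub_in S A x)"

definition compact_in :: "'a::order set \<Rightarrow> 'a \<Rightarrow> bool" where
  "compact_in S a \<longleftrightarrow> a \<in> S \<and>
     (\<forall>A. A \<subseteq> S \<longrightarrow> a \<le> sup_in S A \<longrightarrow> (\<exists>A'. A' \<subseteq> A \<and> finite A' \<and> a \<le> sup_in S A'))"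

definition ideal_lattice_on :: "'a::order set \<Rightarrow> ('a \<Rightarrow> 'a \<Rightarrow> 'a) \<Rightarrow> bool" where
  "ideal_lattice_on S m \<longleftrightarrow>
     (\<forall>a\<in>S. \<forall>b\<in>S. m a b \<in> S) \<and>
     (\<forall>a\<in>S. \<forall>b\<in>S. \<forall>c\<in>S. m (m a b) c = m a (m b c)) \<and>
     \<comment> \<open>L1\<close>
     (\<forall>A. A \<subseteq> S \<longrightarrow> (\<exists>x. is_lub_in S A x)) \<and>
     \<comment> \<open>L2\<close>
     (\<forall>a\<in>S. \<exists>C. C \<subseteq> S \<and> (\<forall>c\<in>C. compact_in S c) \<and> a = sup_in S C) \<and>
     \<comment> \<open>L3\<close>
     (\<forall>a\<in>S. \<forall>b\<in>S. \<forall>c\<in>S.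
        m a (sup_in S {b, c}) = sup_in S {m a b, m a c} \<and>
        m (sup_in S {b, c}) a = sup_in S {m b a, m c a}) \<and>
     \<comment> \<open>L4\<close>
     compact_in S (sup_in S S) \<and>
     (\<forall>a\<in>S. m (sup_in S S) a = a \<and> m a (sup_in S S) = a) \<and>
     \<comment> \<open>L5\<close>
     (\<forall>a\<in>S. \<forall>b\<in>S. compact_in S a \<longrightarrow> compact_in S b \<longrightarrow> compact_in S (m a b))"

definition directed_set :: "'a::order set \<Rightarrow> bool" where
  "directed_set A \<longleftrightarrow> A \<noteq> {} \<and> (\<forall>x\<in>A. \<forall>y\<in>A. \<exists>z\<in>A. x \<le> z \<and> y \<le> z)"

end

theory Submission
  imports Defs
begin

text \<open>The map \<open>\<pi>\<close> is the closure operator of the closure system \<open>L'\<close>, and the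
supremum in \<open>L'\<close> of a set is the closure of its supremum in \<open>L\<close>. Compatibility (iii)
lets \<open>\<pi>\<close> be moved in and out of products, so associativity, distributivity and the unit
pass from \<open>L\<close> to \<open>L'\<close>. Because \<open>L'\<close> is closed under directed suprema, the closure of a
supremum is the directed supremum of the closures of its finite subsuprema; hence \<open>\<pi>\<close>
maps compact elements to compact elements, and every compact element of \<open>L'\<close> is the
closure of a compact element of \<open>L\<close> (a finite supremum of compact generators).\<close>

lemma is_lub_in_unique: "is_lub_in S A x \<Longrightarrow> is_lub_in S A y \<Longrightarrow> x = y"
  unfolding is_lub_in_def by (blast intro: order.antisym)

lemma sup_in_eqI: "is_lub_in S A x \<Longrightarrow> sup_in S A = x"
  unfolding sup_in_def using is_lub_in_unique by blast

lemma is_lub_in_UNIV_Sup: "is_lub_in (UNIV :: 'a::complete_lattice set) A (Sup A)"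
  unfolding is_lub_in_def by (auto intro: Sup_upper Sup_least)

lemma sup_in_UNIV [simp]: "sup_in (UNIV :: 'a::complete_lattice set) A = Sup A"
  by (rule sup_in_eqI[OF is_lub_in_UNIV_Sup])

lemma compact_in_UNIV_iff:
  "compact_in (UNIV :: 'a::complete_lattice set) a \<longleftrightarrow>
     (\<forall>A. a \<le> Sup A \<longrightarrow> (\<exists>A'\<subseteq>A. finite A' \<and> a \<le> Sup A'))"
  unfolding compact_in_def by auto

lemma compact_in_UNIV_Sup_finite:
  fixes C :: "'a::complete_lattice set"
  assumes "finite C" and "\<forall>c\<in>C. compact_in UNIV c"
  shows "compact_in UNIV (Sup C)"
  using assms
proof (induction C rule: finite_induct)
  case empty
  show ?case unfolding compact_in_UNIV_iff by auto
next
  case (insert x F)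
  show ?case unfolding compact_in_UNIV_iff
  proof (intro allI impI)
    fix A assume le: "Sup (insert x F) \<le> Sup A"
    then have "x \<le> Sup A" and "Sup F \<le> Sup A" by simp_all
    moreover have "compact_in UNIV x" and "compact_in UNIV (Sup F)" using insert by simp_all
    ultimately obtain A1 A2 where "A1 \<subseteq> A" "finite A1" "x \<le> Sup A1"
      and "A2 \<subseteq> A" "finite A2" "Sup F \<le> Sup A2"
      unfolding compact_in_UNIV_iff by meson
    then show "\<exists>A'\<subseteq>A. finite A' \<and> Sup (insert x F) \<le> Sup A'"
      by (intro exI[of _ "A1 \<union> A2"]) (auto simp: Sup_union_distrib le_supI1 le_supI2)
  qed
qed

lemma directed_set_finite_subset_bound:
  assumes "directed_set D" and "finite F" and "F \<subseteq> D"
  shows "\<exists>z\<in>D. \<forall>x\<in>F. x \<le> z"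
  using assms(2,3)
proof (induction F rule: finite_induct)
  case empty
  then show ?case using assms(1) unfolding directed_set_def by blast
next
  case (insert x F)
  then obtain z where "z \<in> D" "\<forall>y\<in>F. y \<le> z" by blast
  moreover obtain w where "w \<in> D" "x \<le> w" "z \<le> w"
    using assms(1) insert.prems \<open>z \<in> D\<close> unfolding directed_set_def by blast
  ultimately show ?case by (blast intro: order_trans)
qed

lemma compact_le_directed_Sup:
  fixes c :: "'a::complete_lattice"
  assumes "compact_in UNIV c" and "directed_set D" and "c \<le> Sup D"
  shows "\<exists>d\<in>D. c \<le> d"
proof -
  obtain F where "F \<subseteq> D" "finite F" "c \<le> Sup F"
    using assms(1,3) unfolding compact_in_UNIV_iff by blast
  moreover obtain d where "d \<in> D" "\<forall>x\<in>F. x \<le> d"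
    using directed_set_finite_subset_bound[OF assms(2)] \<open>finite F\<close> \<open>F \<subseteq> D\<close> by blast
  ultimately show ?thesis by (meson Sup_least order_trans)
qed

locale ideal_lattice =
  fixes m :: "'a::complete_lattice \<Rightarrow> 'a \<Rightarrow> 'a"
  assumes mult_assoc: "m (m a b) c = m a (m b c)"
    and Sup_compact_generators: "\<exists>C. (\<forall>c\<in>C. compact_in UNIV c) \<and> a = Sup C"
    and mult_sup_distrib_left: "m a (sup b c) = sup (m a b) (m a c)"
    and mult_sup_distrib_right: "m (sup b c) a = sup (m b a) (m c a)"
    and compact_top: "compact_in UNIV (top :: 'a)"
    and mult_top_left: "m top a = a"
    and mult_top_right: "m a top = a"
    and compact_mult: "compact_in UNIV a \<Longrightarrow> compact_in UNIV b \<Longrightarrow> compact_in UNIV (m a b)"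

lemma ideal_lattice_on_UNIV_imp_ideal_lattice:
  assumes "ideal_lattice_on (UNIV :: 'a::complete_lattice set) m"
  shows "ideal_lattice m"
  using assms unfolding ideal_lattice_on_def ideal_lattice_def by (simp add: Sup_UNIV)

locale closure_system =
  fixes L :: "'a::complete_lattice set"
    and cl :: "'a \<Rightarrow> 'a"
  assumes Inf_closed: "A \<subseteq> L \<Longrightarrow> Inf A \<in> L"
    and cl_def: "cl a = Inf {b \<in> L. a \<le> b}"
begin

lemma cl_in: "cl a \<in> L"
  unfolding cl_def by (rule Inf_closed) auto

lemma cl_upper: "a \<le> cl a"
  unfolding cl_def by (auto intro: Inf_greatest)

lemma cl_least: "b \<in> L \<Longrightarrow> a \<le> b \<Longrightarrow> cl a \<le> b"
  unfolding cl_def by (auto intro: Inf_lower)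

lemma cl_mono: "a \<le> b \<Longrightarrow> cl a \<le> cl b"
  by (rule cl_least[OF cl_in order_trans[OF _ cl_upper]])

lemma cl_ident: "a \<in> L \<Longrightarrow> cl a = a"
  by (rule order.antisym[OF cl_least[OF _ order_refl] cl_upper])

lemma top_in: "top \<in> L"
  using Inf_closed[of "{}"] by simp

lemma is_lub_in_cl_Sup: "is_lub_in L A (cl (Sup A))"
  unfolding is_lub_in_def
  by (auto intro: cl_in order_trans[OF Sup_upper cl_upper] cl_least Sup_least)

lemma sup_in_eq_cl_Sup: "sup_in L A = cl (Sup A)"
  by (rule sup_in_eqI[OF is_lub_in_cl_Sup])

lemma sup_in_self: "sup_in L L = top"
proof -
  have "Sup L = top" using Sup_upper[OF top_in] by (rule top_le)
  then show ?thesis unfolding sup_in_eq_cl_Sup using top_in by (simp add: cl_ident)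
qed

lemma cl_Sup_image_cl: "cl (Sup (cl ` B)) = cl (Sup B)"
proof (rule order.antisym)
  have "cl b \<le> cl (Sup B)" if "b \<in> B" for b
    using that by (intro cl_mono Sup_upper)
  then have "Sup (cl ` B) \<le> cl (Sup B)" by (auto intro: Sup_least)
  then show "cl (Sup (cl ` B)) \<le> cl (Sup B)" by (rule cl_least[OF cl_in])
  have "Sup B \<le> Sup (cl ` B)" by (auto intro: Sup_mono cl_upper)
  then show "cl (Sup B) \<le> cl (Sup (cl ` B))" by (rule cl_mono)
qed

lemma cl_sup_cl: "cl (sup (cl a) (cl b)) = cl (sup a b)"
  using cl_Sup_image_cl[of "{a, b}"] by simp

lemma sup_in_cl_image: "Sup C \<in> L \<Longrightarrow> sup_in L (cl ` C) = Sup C"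
  unfolding sup_in_eq_cl_Sup cl_Sup_image_cl by (rule cl_ident)

lemma compact_in_generators_imp_ex_compact_cl:
  assumes a: "compact_in L a" and C: "\<forall>c\<in>C. compact_in UNIV c" "a = Sup C"
  shows "\<exists>k. compact_in UNIV k \<and> a = cl k"
proof -
  have "a \<in> L" using a unfolding compact_in_def by simp
  then have "a \<le> sup_in L (cl ` C)" using C(2) sup_in_cl_image by simp
  moreover have "cl ` C \<subseteq> L" using cl_in by blast
  ultimately obtain A' where A': "A' \<subseteq> cl ` C" "finite A'" "a \<le> sup_in L A'"
    using a unfolding compact_in_def by blast
  then obtain C' where C': "C' \<subseteq> C" "finite C'" "A' = cl ` C'"
    by (meson finite_subset_image)
  have "a \<le> cl (Sup C')"
    using A'(3) unfolding C'(3) sup_in_eq_cl_Sup cl_Sup_image_cl .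
  have "cl (Sup C') \<le> a"
    using C(2) C'(1) \<open>a \<in> L\<close> by (intro cl_least) (auto intro: Sup_subset_mono)
  moreover have "compact_in UNIV (Sup C')"
    using C(1) C' by (intro compact_in_UNIV_Sup_finite) auto
  ultimately show ?thesis using \<open>a \<le> cl (Sup C')\<close> by (auto intro: order.antisym)
qed

end

locale algebraic_closure_system = closure_system +
  assumes directed_Sup_closed: "A \<subseteq> L \<Longrightarrow> directed_set A \<Longrightarrow> Sup A \<in> L"
begin

lemma directed_set_cl_Sup_finite: "directed_set {cl (Sup F) |F. finite F \<and> F \<subseteq> A}"
  unfolding directed_set_def
proof (intro conjI ballI)
  show "{cl (Sup F) |F. finite F \<and> F \<subseteq> A} \<noteq> {}" by blast
  fix x y assume "x \<in> {cl (Sup F) |F. finite F \<and> F \<subseteq> A}" "y \<in> {cl (Sup F) |F. finite F \<and> F \<subseteq> A}"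
  then obtain F G where "finite F" "F \<subseteq> A" "x = cl (Sup F)" "finite G" "G \<subseteq> A" "y = cl (Sup G)"
    by blast
  then show "\<exists>z\<in>{cl (Sup F) |F. finite F \<and> F \<subseteq> A}. x \<le> z \<and> y \<le> z"
    by (intro bexI[of _ "cl (Sup (F \<union> G))"]) (auto intro!: cl_mono Sup_subset_mono)
qed

lemma cl_Sup_eq_Sup_cl_Sup_finite: "cl (Sup A) = Sup {cl (Sup F) |F. finite F \<and> F \<subseteq> A}"
proof (rule order.antisym)
  have "Sup {cl (Sup F) |F. finite F \<and> F \<subseteq> A} \<in> L"
    using directed_set_cl_Sup_finite cl_in by (intro directed_Sup_closed) auto
  moreover have "Sup A \<le> Sup {cl (Sup F) |F. finite F \<and> F \<subseteq> A}"
  proof (rule Sup_least)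
    fix x assume "x \<in> A"
    then have "cl (Sup {x}) \<in> {cl (Sup F) |F. finite F \<and> F \<subseteq> A}" by blast
    then show "x \<le> Sup {cl (Sup F) |F. finite F \<and> F \<subseteq> A}"
      using cl_upper[of x] by (auto intro: order_trans[OF _ Sup_upper])
  qed
  ultimately show "cl (Sup A) \<le> Sup {cl (Sup F) |F. finite F \<and> F \<subseteq> A}"
    by (rule cl_least)
  show "Sup {cl (Sup F) |F. finite F \<and> F \<subseteq> A} \<le> cl (Sup A)"
    by (auto intro!: Sup_least cl_mono Sup_subset_mono)
qed

lemma compact_le_cl_Sup:
  assumes "compact_in UNIV c" and "c \<le> cl (Sup A)"
  shows "\<exists>F\<subseteq>A. finite F \<and> c \<le> cl (Sup F)"
  using compact_le_directed_Sup[OF assms(1) directed_set_cl_Sup_finite] assms(2)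
  unfolding cl_Sup_eq_Sup_cl_Sup_finite[of A] by blast

lemma compact_in_cl: "compact_in UNIV c \<Longrightarrow> compact_in L (cl c)"
  unfolding compact_in_def[of L] sup_in_eq_cl_Sup
  by (meson cl_in cl_least cl_upper compact_le_cl_Sup order_trans)

lemma compact_generators_cl:
  assumes "\<forall>c\<in>C. compact_in UNIV c" and "Sup C \<in> L"
  shows "\<exists>C'\<subseteq>L. (\<forall>c\<in>C'. compact_in L c) \<and> Sup C = sup_in L C'"
  using assms cl_in compact_in_cl sup_in_cl_image
  by (intro exI[of _ "cl ` C"]) auto

end

locale closure_quotient = algebraic_closure_system L cl + ideal_lattice m
  for L :: "'a::complete_lattice set" and cl and m +
  assumes cl_mult_cl_right: "cl (m a (cl b)) = cl (m a b)"
    and cl_mult_cl_left: "cl (m (cl a) b) = cl (m a b)"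
begin

lemma cl_mult_assoc: "cl (m (cl (m a b)) c) = cl (m a (cl (m b c)))"
  by (simp add: cl_mult_cl_left cl_mult_cl_right mult_assoc)

lemma cl_mult_sup_in_distrib_left:
  "cl (m a (sup_in L {b, c})) = sup_in L {cl (m a b), cl (m a c)}"
  by (simp add: sup_in_eq_cl_Sup cl_mult_cl_right mult_sup_distrib_left cl_sup_cl)

lemma cl_mult_sup_in_distrib_right:
  "cl (m (sup_in L {b, c}) a) = sup_in L {cl (m b a), cl (m c a)}"
  by (simp add: sup_in_eq_cl_Sup cl_mult_cl_left mult_sup_distrib_right cl_sup_cl)

lemma compact_in_imp_ex_compact_cl:
  assumes "compact_in L a"
  shows "\<exists>k. compact_in UNIV k \<and> a = cl k"
proof -
  obtain C where "\<forall>c\<in>C. compact_in UNIV c" "a = Sup C"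
    using Sup_compact_generators by blast
  then show ?thesis using compact_in_generators_imp_ex_compact_cl[OF assms] by blast
qed

lemma compact_in_cl_mult:
  assumes "compact_in L a" and "compact_in L b"
  shows "compact_in L (cl (m a b))"
proof -
  obtain k1 k2 where "compact_in UNIV k1" "a = cl k1" "compact_in UNIV k2" "b = cl k2"
    using assms compact_in_imp_ex_compact_cl by meson
  then show ?thesis
    by (simp add: cl_mult_cl_left cl_mult_cl_right compact_in_cl compact_mult)
qed

lemma ideal_lattice_on_cl_mult: "ideal_lattice_on L (\<lambda>a b. cl (m a b))"
  unfolding ideal_lattice_on_def sup_in_self
proof (intro conjI ballI allI impI)
  fix a assume "a \<in> L"
  obtain C where "\<forall>c\<in>C. compact_in UNIV c" "a = Sup C"
    using Sup_compact_generators by blast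
  then show "\<exists>C\<subseteq>L. (\<forall>c\<in>C. compact_in L c) \<and> a = sup_in L C"
    using compact_generators_cl \<open>a \<in> L\<close> by blast
  show "cl (m top a) = a" "cl (m a top) = a"
    using \<open>a \<in> L\<close> by (simp_all add: mult_top_left mult_top_right cl_ident)
next
  show "compact_in L top" using compact_in_cl[OF compact_top] top_in by (simp add: cl_ident)
qed (use cl_in cl_mult_assoc is_lub_in_cl_Sup cl_mult_sup_in_distrib_left
      cl_mult_sup_in_distrib_right compact_in_cl_mult in blast)+

end

theorem mainTheorem12:
  fixes m :: "'a::complete_lattice \<Rightarrow> 'a \<Rightarrow> 'a"
    and L' :: "'a set"
    and \<pi> :: "'a \<Rightarrow> 'a"
  assumes L: "ideal_lattice_on (UNIV :: 'a set) m"
    and inf_closed: "\<forall>A. A \<subseteq> L' \<longrightarrow> Inf A \<in> L'"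
    and dir_closed: "\<forall>A. A \<subseteq> L' \<longrightarrow> directed_set A \<longrightarrow> Sup A \<in> L'"
    and pi_def: "\<forall>a. \<pi> a = Inf {a' \<in> L'. a \<le> a'}"
    and compat: "\<forall>a b. \<pi> (m a (\<pi> b)) = \<pi> (m a b) \<and> \<pi> (m a b) = \<pi> (m (\<pi> a) b)"
  shows "ideal_lattice_on L' (\<lambda>a b. \<pi> (m a b))"
proof -
  interpret ideal_lattice m
    using L by (rule ideal_lattice_on_UNIV_imp_ideal_lattice)
  interpret closure_quotient L' \<pi> m
    using inf_closed dir_closed pi_def compat by unfold_locales simp_all
  show ?thesis by (rule ideal_lattice_on_cl_mult)
qed

end
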